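(* Let $X$ be a real Hilbert space and $I$ either $[0,T]$ ($T>0$) or $[0,+\infty)$. Assume: $K\subset X$ is a nonempty closed convex cone; $A:X\to X$ satisfies $(Au-Av,u-v)_X\ge m_A\|u-v\|_X^2$ and $\|Au-Av\|_X\le L_A\|u-v\|_X$ for all $u,v\in X$, with $m_A,L_A>0$; $f\in C(I;X)$; $B:X\to X$ is Lipschitz continuous; $u_0\in X$; $\mathcal{S}:C(I;X)\to C(I;X)$ is a history-dependent operator; $j:X\times K\to\mathbb{R}$ is such that $j(\eta,\cdot)$ is convex, positively homogeneous and Lipschitz continuous on $K$ for every $\eta\in X$, and there is $\alpha_j\ge0$ with $j(\eta_1,v_2)-j(\eta_1,v_1)+j(\eta_2,v_1)-j(\eta_2,v_2)\le\alpha_j\|\eta_1-\eta_2\|_X\|v_1-v_2\|_X$ for all $\eta_i\in X$, $v_i\in K$. Then there exists a unique function $u\in C^1(I;X)$ such that $$-\dot u(t)\in \mathrm{N}_{C(u(t),t)}\big(A\dot u(t)+Bu(t)+\mathcal{S}u(t)\big)\quad\forall\,t\in I,\qquad u(0)=u_0.$$ Moreover, $\dot u\in C(I;K)$.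
   Context: $\mathcal{S}$ is history-dependent if for every compact $\mathcal J\subset I$ there is $L_{\mathcal J}>0$ with $\|\mathcal{S}u_1(t)-\mathcal{S}u_2(t)\|_X\le L_{\mathcal J}\int_0^t\|u_1(s)-u_2(s)\|_X ds$ for all $u_1,u_2\in C(I;X)$, $t\in\mathcal J$. Define $J(\eta,v)=j(\eta,v)$ for $v\in K$, $J(\eta,v)=+\infty$ for $v\notin K$; $C(\eta)=\{\xi\in X: J(\eta,v)\ge(\xi,v)_X\ \forall v\in X\}$; $C(\eta,t)=f(t)-C(\eta)$. For a nonempty closed convex $D\subset X$, $\mathrm{N}_D(x)=\{\xi:(\xi,w-x)_X\le0\ \forall w\in D\}$ if $x\in D$, $\emptyset$ otherwise. *)

theory Defs
  imports "HOL-Analysis.Analysis"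
begin

definition tdot :: "real set \<Rightarrow> (real \<Rightarrow> 'a::real_normed_vector) \<Rightarrow> real \<Rightarrow> 'a" where
  "tdot I u t = vector_derivative u (at t within I)"

definition C1_on :: "real set \<Rightarrow> (real \<Rightarrow> 'a::real_normed_vector) \<Rightarrow> bool" where
  "C1_on I u \<longleftrightarrow> (\<forall>t\<in>I. u differentiable (at t within I)) \<and> continuous_on I (tdot I u)"

definition history_dependent ::
  "real set \<Rightarrow> ((real \<Rightarrow> 'a::real_normed_vector) \<Rightarrow> (real \<Rightarrow> 'a)) \<Rightarrow> bool" where
  "history_dependent I S \<longleftrightarrow>
     (\<forall>J. compact J \<and> J \<subseteq> I \<longrightarrow>
        (\<exists>L>0. \<forall>u1 u2. continuous_on I u1 \<and> continuous_on I u2 \<longrightarrow>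
            (\<forall>t\<in>J. norm (S u1 t - S u2 t) \<le> L * integral {0..t} (\<lambda>s. norm (u1 s - u2 s)))))"

definition Jfun :: "('a \<Rightarrow> 'a \<Rightarrow> real) \<Rightarrow> 'a set \<Rightarrow> 'a \<Rightarrow> 'a \<Rightarrow> ereal" where
  "Jfun j K \<eta> v = (if v \<in> K then ereal (j \<eta> v) else \<infinity>)"

definition Cset :: "('a::real_inner \<Rightarrow> 'a \<Rightarrow> real) \<Rightarrow> 'a set \<Rightarrow> 'a \<Rightarrow> 'a set" where
  "Cset j K \<eta> = {\<xi>. \<forall>v. Jfun j K \<eta> v \<ge> ereal (\<xi> \<bullet> v)}"

definition Ct :: "(real \<Rightarrow> 'a::real_inner) \<Rightarrow> ('a \<Rightarrow> 'a \<Rightarrow> real) \<Rightarrow> 'a set \<Rightarrow> 'a \<Rightarrow> real \<Rightarrow> 'a set" where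
  "Ct f j K \<eta> t = (\<lambda>\<xi>. f t - \<xi>) ` Cset j K \<eta>"

definition normal_cone :: "'a::real_inner set \<Rightarrow> 'a \<Rightarrow> 'a set" where
  "normal_cone D x = (if x \<in> D then {\<xi>. \<forall>w\<in>D. \<xi> \<bullet> (w - x) \<le> 0} else {})"

end

(*
  The inclusion -u' \<in> N_{C(u,t)}(Au' + Bu + Su) is a pointwise statement about u'(t). Since
  C(\<eta>) is the set of minorants of the sublinear functional j(\<eta>,-) on the cone K, its support
  function is j(\<eta>,-) on K and +\<infinity> off K; consequently the inclusion holds iff u'(t) \<in> K
  solves the variational inequality
    (Au' + Bu + Su - f, v - u') + j(u, v) - j(u, u') \<ge> 0   for all v \<in> K.
  By strong monotonicity of A this inequality has exactly one solution, obtained as the fixed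
  point of a contractive proximal-gradient map, and it depends Lipschitz-continuously on
  (u, Bu + Su - f), with constants \<alpha>_j/m_A and 1/m_A. Hence the problem is equivalent to the
  integral equation u(t) = u_0 + \<integral>_0^t velocity(u)(s) ds, whose right-hand side is a
  history-dependent operator. Picard iteration with the factorial bounds of Gronwall's argument
  shows that such an operator has exactly one continuous fixed point.
*)

theory Submission
  imports Defs
begin

section \<open>Integrals of functions with values in a complete normed space\<close>

text \<open>The library's integration theory requires class \<open>banach\<close>, which a type of sort
  \<open>{real_inner, complete_space}\<close> is not known to belong to. Products of complete normed
  spaces are, so integrals are computed in \<open>'a \<times> real\<close> and projected back with \<open>fst\<close>.\<close>

instance prod :: ("{real_normed_vector,complete_space}", "{real_normed_vector,complete_space}") banach ..

lemma integrable_continuous_complete: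
  fixes g :: "real \<Rightarrow> 'a::{real_normed_vector,complete_space}"
  assumes "continuous_on {a..b} g"
  shows "g integrable_on {a..b}"
proof -
  have "(\<lambda>s. (g s, 0::real)) integrable_on {a..b}"
    by (intro integrable_continuous_interval continuous_intros assms)
  from integrable_linear[OF this bounded_linear_fst] show ?thesis by (simp add: o_def)
qed

lemma integral_eq_fst_integral_pair:
  fixes g :: "real \<Rightarrow> 'a::{real_normed_vector,complete_space}"
  assumes "continuous_on {a..b} g"
  shows "integral {a..b} g = fst (integral {a..b} (\<lambda>s. (g s, 0::real)))"
proof -
  have "(\<lambda>s. (g s, 0::real)) integrable_on {a..b}"
    by (intro integrable_continuous_interval continuous_intros assms)
  from integral_linear[OF this bounded_linear_fst] show ?thesis by (simp add: o_def)
qed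

lemma integral_has_vector_derivative_complete:
  fixes g :: "real \<Rightarrow> 'a::{real_normed_vector,complete_space}"
  assumes g: "continuous_on {a..b} g" and x: "x \<in> {a..b}"
  shows "((\<lambda>u. integral {a..u} g) has_vector_derivative g x) (at x within {a..b})"
proof -
  have "((\<lambda>u. integral {a..u} (\<lambda>s. (g s, 0::real))) has_vector_derivative (g x, 0)) (at x within {a..b})"
    by (rule integral_has_vector_derivative[OF _ x]) (intro continuous_intros g)
  from bounded_linear.has_vector_derivative[OF bounded_linear_fst this]
  have "((\<lambda>u. fst (integral {a..u} (\<lambda>s. (g s, 0::real)))) has_vector_derivative g x) (at x within {a..b})"
    by simp
  then show ?thesis
    by (rule has_vector_derivative_transform[OF x, rotated])
       (auto intro!: integral_eq_fst_integral_pair intro: continuous_on_subset[OF g])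
qed

lemma fundamental_theorem_of_calculus_complete:
  fixes f :: "real \<Rightarrow> 'a::{real_normed_vector,complete_space}"
  assumes "a \<le> b"
    and "\<And>x. x \<in> {a..b} \<Longrightarrow> (f has_vector_derivative f' x) (at x within {a..b})"
  shows "(f' has_integral (f b - f a)) {a..b}"
proof -
  have "((\<lambda>x. (f' x, 0::real)) has_integral ((f b, 0) - (f a, 0))) {a..b}"
    using assms by (intro fundamental_theorem_of_calculus derivative_intros) auto
  from has_integral_linear[OF this bounded_linear_fst] show ?thesis by (simp add: o_def)
qed

lemma integral_norm_bound_integral_complete:
  fixes g :: "real \<Rightarrow> 'a::{real_normed_vector,complete_space}"
  assumes g: "continuous_on {a..b} g"
  shows "norm (integral {a..b} g) \<le> integral {a..b} (\<lambda>s. norm (g s))"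
proof -
  have "norm (integral {a..b} g) \<le> norm (integral {a..b} (\<lambda>s. (g s, 0::real)))"
    unfolding integral_eq_fst_integral_pair[OF g] by (metis norm_fst_le prod.collapse)
  also have "\<dots> \<le> integral {a..b} (\<lambda>s. norm (g s, 0::real))"
    using g by (intro integral_norm_bound_integral integrable_continuous_interval continuous_intros) auto
  finally show ?thesis by simp
qed

section \<open>Fixed points of history-dependent operators\<close>

lemma integral_power_Icc_0:
  assumes "0 \<le> t"
  shows "integral {0..t} (\<lambda>s. s ^ n) = t ^ Suc n / Suc n"
proof -
  have "((\<lambda>s. s ^ Suc n / Suc n) has_real_derivative s ^ n) (at s within {0..t})" for s :: real
    by (rule DERIV_cdivide[OF DERIV_pow, THEN DERIV_cong, THEN has_field_derivative_at_within])
       (simp del: of_nat_Suc)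
  then have "((\<lambda>s. s ^ n) has_integral (t ^ Suc n / Suc n - 0 ^ Suc n / Suc n)) {0..t}"
    using assms by (intro fundamental_theorem_of_calculus)
                   (auto simp: has_real_derivative_iff_has_vector_derivative)
  then show ?thesis by (simp add: integral_unique)
qed

lemma volterra_iterates_bound:
  fixes \<phi> :: "nat \<Rightarrow> real \<Rightarrow> real"
  assumes K: "0 \<le> K"
    and cont: "\<And>n. continuous_on {0..b} (\<phi> n)"
    and base: "\<And>s. s \<in> {0..b} \<Longrightarrow> \<phi> 0 s \<le> M"
    and step: "\<And>n t. t \<in> {0..b} \<Longrightarrow> \<phi> (Suc n) t \<le> K * integral {0..t} (\<phi> n)"
    and t: "t \<in> {0..b}"
  shows "\<phi> n t \<le> M * (K * t) ^ n / fact n"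
  using t
proof (induction n arbitrary: t)
  case 0
  then show ?case using base by simp
next
  case (Suc n)
  define c where "c = M * K ^ n / fact n"
  have sub: "{0..t} \<subseteq> {0..b}" using Suc.prems by auto
  have "integral {0..t} (\<phi> n) \<le> integral {0..t} (\<lambda>s. c * s ^ n)"
  proof (rule integral_le)
    show "\<phi> n integrable_on {0..t}"
      by (rule integrable_continuous_real[OF continuous_on_subset[OF cont sub]])
    show "(\<lambda>s. c * s ^ n) integrable_on {0..t}"
      by (intro integrable_continuous_real continuous_intros)
    show "\<phi> n s \<le> c * s ^ n" if "s \<in> {0..t}" for s
      using Suc.IH[of s] that sub by (auto simp: c_def power_mult_distrib)
  qed
  also have "\<dots> = c * (t ^ Suc n / Suc n)"
    using Suc.prems by (simp add: integral_power_Icc_0)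
  finally have "K * integral {0..t} (\<phi> n) \<le> K * (c * (t ^ Suc n / Suc n))"
    using K by (rule mult_left_mono)
  also have "\<dots> = M * (K * t) ^ Suc n / fact (Suc n)"
    by (simp add: c_def power_mult_distrib field_simps)
  finally show ?case using step[OF Suc.prems, of n] by linarith
qed

lemma gronwall_zero:
  fixes \<phi> :: "real \<Rightarrow> real"
  assumes K: "0 \<le> K" and cont: "continuous_on {0..b} \<phi>"
    and nonneg: "\<And>t. t \<in> {0..b} \<Longrightarrow> 0 \<le> \<phi> t"
    and le: "\<And>t. t \<in> {0..b} \<Longrightarrow> \<phi> t \<le> K * integral {0..t} \<phi>"
    and t: "t \<in> {0..b}"
  shows "\<phi> t = 0"
proof -
  obtain M where M: "\<And>s. s \<in> {0..b} \<Longrightarrow> \<phi> s \<le> M"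
    using continuous_attains_sup[OF compact_Icc _ cont] t by fastforce
  have "\<phi> t \<le> M * (K * t) ^ n / fact n" for n
    by (rule volterra_iterates_bound[where \<phi>="\<lambda>_. \<phi>", OF K cont M le t])
  moreover have "(\<lambda>n. M * (inverse (fact n) * (K * t) ^ n)) \<longlonglongrightarrow> 0"
    by (intro tendsto_mult_right_zero summable_LIMSEQ_zero summable_exp)
  ultimately have "\<phi> t \<le> 0"
    by (intro LIMSEQ_le[OF tendsto_const]) (auto simp: divide_inverse ac_simps)
  with nonneg[OF t] show ?thesis by simp
qed

lemma uniformly_convergent_on_summable_increments:
  fixes X :: "nat \<Rightarrow> 'b \<Rightarrow> 'a::{real_normed_vector,complete_space}"
  assumes bound: "\<And>n x. x \<in> A \<Longrightarrow> norm (X (Suc n) x - X n x) \<le> c n"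
    and c: "summable c"
  shows "uniformly_convergent_on A X"
proof (rule Cauchy_uniformly_convergent, rule uniformly_Cauchy_onI')
  fix e :: real assume "e > 0"
  then obtain N where N: "\<And>m. m \<ge> N \<Longrightarrow> norm (\<Sum>i. c (i + m)) < e"
    using suminf_exist_split[OF _ c] by blast
  show "\<exists>M. \<forall>x\<in>A. \<forall>m\<ge>M. \<forall>n>m. dist (X m x) (X n x) < e"
  proof (intro exI[of _ N] ballI allI impI)
    fix x m n assume x: "x \<in> A" and m: "m \<ge> N" and n: "n > m"
    have c_nonneg: "0 \<le> c k" for k using bound[OF x, of k] norm_ge_zero order_trans by blast
    have "dist (X m x) (X n x) = norm (\<Sum>k = m..<n. X (Suc k) x - X k x)"
      using sum_Suc_diff'[of m n "\<lambda>k. X k x"] n by (simp add: dist_norm norm_minus_commute)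
    also have "\<dots> \<le> (\<Sum>k = m..<n. c k)"
      using bound[OF x] by (intro sum_norm_le) auto
    also have "\<dots> = (\<Sum>i<n - m. c (i + m))"
      using n by (intro sum.reindex_bij_witness[of _ "\<lambda>k. k + m" "\<lambda>k. k - m"]) auto
    also have "\<dots> \<le> (\<Sum>i. c (i + m))"
      using c_nonneg by (intro sum_le_suminf summable_ignore_initial_segment c) auto
    also have "\<dots> < e" using N[OF m] by simp
    finally show "dist (X m x) (X n x) < e" .
  qed
qed

lemma history_dependent_Icc:
  assumes "history_dependent I \<Gamma>" "{0..b} \<subseteq> I"
  obtains L where "L > 0" and "\<And>u v t. continuous_on I u \<Longrightarrow> continuous_on I v \<Longrightarrow> t \<in> {0..b} \<Longrightarrow>
      norm (\<Gamma> u t - \<Gamma> v t) \<le> L * integral {0..t} (\<lambda>s. norm (u s - v s))"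
  using assms unfolding history_dependent_def by (meson compact_Icc)

lemma history_dependent_iterates_converge:
  fixes \<Gamma> :: "(real \<Rightarrow> 'a::{real_normed_vector,complete_space}) \<Rightarrow> real \<Rightarrow> 'a"
  assumes hist: "history_dependent I \<Gamma>" and b: "0 \<le> b" "{0..b} \<subseteq> I"
    and U_cont: "\<And>n. continuous_on I (U n)" and U_Suc: "\<And>n. U (Suc n) = \<Gamma> (U n)"
  shows "uniformly_convergent_on {0..b} U"
proof -
  obtain L where L: "L > 0" and lip: "\<And>u v t. continuous_on I u \<Longrightarrow> continuous_on I v \<Longrightarrow>
      t \<in> {0..b} \<Longrightarrow> norm (\<Gamma> u t - \<Gamma> v t) \<le> L * integral {0..t} (\<lambda>s. norm (u s - v s))"
    using history_dependent_Icc[OF hist b(2)] by blast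
  define \<delta> where "\<delta> n t = norm (U (Suc n) t - U n t)" for n t
  have \<delta>_cont: "continuous_on {0..b} (\<delta> n)" for n
    unfolding \<delta>_def using U_cont b(2) by (intro continuous_intros) (auto intro: continuous_on_subset)
  obtain M where M: "\<And>s. s \<in> {0..b} \<Longrightarrow> \<delta> 0 s \<le> M"
    using continuous_attains_sup[OF compact_Icc _ \<delta>_cont] b(1) by fastforce
  have M_nonneg: "0 \<le> M" using M[of 0] b(1) by (simp add: \<delta>_def) (meson norm_ge_zero order_trans)
  have "norm (U (Suc n) t - U n t) \<le> M * (L * b) ^ n / fact n" if t: "t \<in> {0..b}" for n t
  proof -
    have "\<delta> n t \<le> M * (L * t) ^ n / fact n"
    proof (rule volterra_iterates_bound[where \<phi>=\<delta> and K=L, OF _ \<delta>_cont M _ t])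
      show "\<delta> (Suc n) t \<le> L * integral {0..t} (\<delta> n)" if "t \<in> {0..b}" for n t
        using lip[OF U_cont U_cont that, of "Suc n" n] by (simp only: \<delta>_def[abs_def] U_Suc)
    qed (use L in simp)
    also have "\<dots> \<le> M * (L * b) ^ n / fact n"
      using t L M_nonneg by (intro divide_right_mono mult_left_mono power_mono) auto
    finally show ?thesis unfolding \<delta>_def .
  qed
  moreover have "summable (\<lambda>n. M * (L * b) ^ n / fact n)"
    using summable_mult[OF summable_exp[of "L * b"], of M] by (simp add: field_simps)
  ultimately show ?thesis by (rule uniformly_convergent_on_summable_increments)
qed

lemma history_dependent_fixed_point_unique:
  fixes \<Gamma> :: "(real \<Rightarrow> 'a::real_normed_vector) \<Rightarrow> real \<Rightarrow> 'a"
  assumes hist: "history_dependent I \<Gamma>" and t: "0 \<le> t" "{0..t} \<subseteq> I"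
    and u: "continuous_on I u" "\<And>s. s \<in> I \<Longrightarrow> \<Gamma> u s = u s"
    and w: "continuous_on I w" "\<And>s. s \<in> I \<Longrightarrow> \<Gamma> w s = w s"
  shows "u t = w t"
proof -
  obtain L where L: "L > 0" and lip: "\<And>s. s \<in> {0..t} \<Longrightarrow>
      norm (\<Gamma> u s - \<Gamma> w s) \<le> L * integral {0..s} (\<lambda>r. norm (u r - w r))"
    using history_dependent_Icc[OF hist t(2)] u(1) w(1) by metis
  have "norm (u t - w t) = 0"
  proof (rule gronwall_zero[where \<phi>="\<lambda>s. norm (u s - w s)"])
    show "continuous_on {0..t} (\<lambda>s. norm (u s - w s))"
      using u(1) w(1) t(2) by (intro continuous_intros) (auto intro: continuous_on_subset)
    show "norm (u s - w s) \<le> L * integral {0..s} (\<lambda>r. norm (u r - w r))" if "s \<in> {0..t}" for s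
      using lip[OF that] u(2) w(2) that t(2) by auto
  qed (use L t in auto)
  then show ?thesis by simp
qed

lemma integral_norm_diff_tendsto_zero:
  fixes f :: "nat \<Rightarrow> real \<Rightarrow> 'a::real_normed_vector"
  assumes lim: "uniform_limit {a..b} f g sequentially"
    and cont: "\<And>n. continuous_on {a..b} (f n)"
  shows "(\<lambda>n. integral {a..b} (\<lambda>s. norm (f n s - g s))) \<longlonglongrightarrow> 0"
proof -
  have "continuous_on {a..b} g"
    using lim cont by (intro uniform_limit_theorem[OF _ lim]) auto
  then have norm_cont: "continuous_on {a..b} (\<lambda>s. norm (f n s - g s))" for n
    using cont by (intro continuous_intros)
  have "uniform_limit {a..b} (\<lambda>n s. norm (f n s - g s)) (\<lambda>_. 0) sequentially"
    using lim by (simp add: uniform_limit_iff dist_norm norm_minus_commute)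
  then obtain I J where I: "\<And>n. ((\<lambda>s. norm (f n s - g s)) has_integral I n) {a..b}"
    and J: "((\<lambda>_. 0::real) has_integral J) {a..b}" and IJ: "I \<longlonglongrightarrow> J"
    by (rule uniform_limit_integral[OF _ norm_cont]) auto
  show ?thesis
    using IJ by (simp add: integral_unique[OF I] has_integral_unique[OF J has_integral_0])
qed

lemma history_dependent_tendsto:
  fixes \<Gamma> :: "(real \<Rightarrow> 'a::real_normed_vector) \<Rightarrow> real \<Rightarrow> 'a"
  assumes hist: "history_dependent I \<Gamma>" and t: "0 \<le> t" "{0..t} \<subseteq> I"
    and U: "\<And>n. continuous_on I (U n)" and u: "continuous_on I u"
    and lim: "uniform_limit {0..t} U u sequentially"
  shows "(\<lambda>n. \<Gamma> (U n) t) \<longlonglongrightarrow> \<Gamma> u t"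
proof -
  obtain L where "L > 0" and L: "\<And>v w s. continuous_on I v \<Longrightarrow> continuous_on I w \<Longrightarrow> s \<in> {0..t} \<Longrightarrow>
      norm (\<Gamma> v s - \<Gamma> w s) \<le> L * integral {0..s} (\<lambda>r. norm (v r - w r))"
    using history_dependent_Icc[OF hist t(2)] by blast
  have bound: "norm (\<Gamma> (U n) t - \<Gamma> u t) \<le> L * integral {0..t} (\<lambda>s. norm (U n s - u s))" for n
    using L[OF U u] t(1) by simp
  have "(\<lambda>n. integral {0..t} (\<lambda>s. norm (U n s - u s))) \<longlonglongrightarrow> 0"
    by (rule integral_norm_diff_tendsto_zero[OF lim continuous_on_subset[OF U t(2)]])
  then have "(\<lambda>n. \<Gamma> (U n) t - \<Gamma> u t) \<longlonglongrightarrow> 0"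
    by (intro Lim_null_comparison[OF always_eventually[OF allI[OF bound]]] tendsto_mult_right_zero)
  then show ?thesis by (simp add: LIM_zero_iff)
qed

locale time_interval =
  fixes I :: "real set" and T :: real
  assumes time_interval: "(T > 0 \<and> I = {0..T}) \<or> I = {0..}"
begin

lemma zero_mem: "0 \<in> I"
  using time_interval by auto

lemma nonneg: "t \<in> I \<Longrightarrow> 0 \<le> t"
  using time_interval by auto

lemma Icc_subset: "t \<in> I \<Longrightarrow> {0..t} \<subseteq> I"
  using time_interval by auto

lemma at_within_Icc:
  assumes "t \<in> I"
  obtains b where "0 < b" "t \<le> b" "{0..b} \<subseteq> I" "at t within I = at t within {0..b}"
  using time_interval
proof
  assume "T > 0 \<and> I = {0..T}"
  then show thesis using assms that[of T] by auto
next
  assume I: "I = {0..}"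
  have "at t within {0..} = at t within {0..t + 1}"
    by (rule at_within_nhd[of t "{t - 1<..<t + 1}"]) auto
  then show thesis using assms I that[of "t + 1"] by auto
qed

lemma at_within_nontrivial:
  assumes "t \<in> I"
  shows "at t within I \<noteq> bot"
proof -
  obtain b where "0 < b" "t \<le> b" "at t within I = at t within {0..b}"
    using at_within_Icc[OF assms] .
  then show ?thesis
    using nonneg[OF assms] trivial_limit_within[of t "{0..b}"] by simp
qed

lemma continuous_on_IccI:
  assumes "\<And>b. 0 < b \<Longrightarrow> {0..b} \<subseteq> I \<Longrightarrow> continuous_on {0..b} h"
  shows "continuous_on I h"
  unfolding continuous_on_eq_continuous_within
proof
  fix t assume t: "t \<in> I"
  obtain b where b: "0 < b" "t \<le> b" "{0..b} \<subseteq> I" and at: "at t within I = at t within {0..b}"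
    using at_within_Icc[OF t] .
  have "continuous (at t within {0..b}) h"
    using assms[OF b(1,3)] b(2) nonneg[OF t] by (simp add: continuous_on_eq_continuous_within)
  then show "continuous (at t within I) h" unfolding at .
qed

lemma history_dependent_IccI:
  assumes "\<And>b. 0 \<le> b \<Longrightarrow> {0..b} \<subseteq> I \<Longrightarrow> \<exists>L>0. \<forall>u v. continuous_on I u \<longrightarrow> continuous_on I v \<longrightarrow>
      (\<forall>t\<in>{0..b}. norm (\<Gamma> u t - \<Gamma> v t) \<le> L * integral {0..t} (\<lambda>s. norm (u s - v s)))"
  shows "history_dependent I \<Gamma>"
  unfolding history_dependent_def
proof (intro allI impI)
  fix J assume J: "compact J \<and> J \<subseteq> I"
  show "\<exists>L>0. \<forall>u v. continuous_on I u \<and> continuous_on I v \<longrightarrow>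
      (\<forall>t\<in>J. norm (\<Gamma> u t - \<Gamma> v t) \<le> L * integral {0..t} (\<lambda>s. norm (u s - v s)))"
  proof (cases "J = {}")
    case False
    then obtain b where b: "b \<in> J" and le_b: "\<And>t. t \<in> J \<Longrightarrow> t \<le> b"
      using compact_attains_sup[of J] J by blast
    have "J \<subseteq> {0..b}" using J le_b nonneg by auto
    with assms[OF nonneg Icc_subset] b J show ?thesis by (meson subsetD)
  qed (auto intro: exI[of _ 1])
qed

lemma history_dependent_fixed_point:
  fixes \<Gamma> :: "(real \<Rightarrow> 'a::{real_normed_vector,complete_space}) \<Rightarrow> real \<Rightarrow> 'a"
  assumes maps: "\<And>u. continuous_on I u \<Longrightarrow> continuous_on I (\<Gamma> u)"
    and hist: "history_dependent I \<Gamma>"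
  obtains u where "continuous_on I u" "\<And>t. t \<in> I \<Longrightarrow> \<Gamma> u t = u t"
proof -
  define U where "U n = (\<Gamma> ^^ n) (\<lambda>_. 0)" for n
  have U_Suc: "U (Suc n) = \<Gamma> (U n)" for n
    by (simp add: U_def)
  have U_cont: "continuous_on I (U n)" for n
    by (induction n) (simp_all add: U_def maps)
  define u where "u t = lim (\<lambda>n. U n t)" for t
  have lim: "uniform_limit {0..b} U u sequentially" if "0 < b" "{0..b} \<subseteq> I" for b
    using history_dependent_iterates_converge[where U=U, OF hist less_imp_le[OF that(1)] that(2) U_cont U_Suc]
    unfolding u_def[abs_def] by (simp add: uniformly_convergent_uniform_limit_iff)
  have u_cont: "continuous_on I u"
  proof (rule continuous_on_IccI)
    fix b :: real assume b: "0 < b" "{0..b} \<subseteq> I"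
    show "continuous_on {0..b} u"
      using U_cont b(2)
      by (intro uniform_limit_theorem[OF _ lim[OF b]] always_eventually allI)
         (auto intro: continuous_on_subset)
  qed
  have "\<Gamma> u t = u t" if t: "t \<in> I" for t
  proof -
    obtain b where b: "0 < b" "t \<le> b" "{0..b} \<subseteq> I"
      using at_within_Icc[OF t] by blast
    have lim_t: "uniform_limit {0..t} U u sequentially"
      using b(2) by (intro uniform_limit_on_subset[OF lim[OF b(1,3)]]) simp
    have "(\<lambda>n. U (Suc n) t) \<longlonglongrightarrow> \<Gamma> u t"
      unfolding U_Suc by (rule history_dependent_tendsto[OF hist nonneg[OF t] Icc_subset[OF t] U_cont u_cont lim_t])
    moreover have "(\<lambda>n. U (Suc n) t) \<longlonglongrightarrow> u t"
      using nonneg[OF t] by (intro LIMSEQ_Suc tendsto_uniform_limitI[OF lim_t]) simp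
    ultimately show ?thesis by (rule LIMSEQ_unique)
  qed
  with u_cont that show thesis by blast
qed

end

section \<open>Proximal points and variational inequalities\<close>

lemma norm_midpoint_diff_sq:
  fixes a b g :: "'a::real_inner"
  shows "(norm ((1/2) *\<^sub>R (a + b) - g))\<^sup>2
    = ((norm (a - g))\<^sup>2 + (norm (b - g))\<^sup>2) / 2 - (norm (a - b))\<^sup>2 / 4"
proof -
  have "(1/2) *\<^sub>R (a + b) - g = (1/2) *\<^sub>R ((a - g) + (b - g))"
    by (simp add: algebra_simps flip: scaleR_2)
  moreover have "a - b = (a - g) - (b - g)" by simp
  ultimately show ?thesis
    by (simp only: power2_norm_eq_inner)
       (simp add: inner_add_left inner_add_right inner_diff_left inner_diff_right inner_commute
         field_simps)
qed

lemma norm_segment_diff_sq: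
  fixes w v g :: "'a::real_inner"
  shows "(norm ((1 - s) *\<^sub>R w + s *\<^sub>R v - g))\<^sup>2
    = (norm (w - g))\<^sup>2 + 2 * s * ((w - g) \<bullet> (v - w)) + s\<^sup>2 * (norm (v - w))\<^sup>2"
proof -
  have "(1 - s) *\<^sub>R w + s *\<^sub>R v - g = (w - g) + s *\<^sub>R (v - w)" by (simp add: algebra_simps)
  then show ?thesis
    by (simp only: power2_norm_eq_inner)
       (simp add: inner_add_left inner_add_right inner_commute power2_eq_square algebra_simps)
qed

lemma prox_objective_bdd_below:
  fixes \<phi> :: "'a::real_normed_vector \<Rightarrow> real"
  assumes lip: "L-lipschitz_on K \<phi>" and k: "k \<in> K"
  shows "bdd_below ((\<lambda>w. (norm (w - g))\<^sup>2 / 2 + \<phi> w) ` K)"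
proof (rule bdd_belowI2)
  have L_nonneg: "0 \<le> L" using lip by (simp add: lipschitz_on_def)
  fix w assume w: "w \<in> K"
  have "dist (\<phi> w) (\<phi> k) \<le> L * dist w k" using lipschitz_onD[OF lip w k] .
  then have "\<phi> k - L * norm (w - k) \<le> \<phi> w" by (simp add: dist_norm abs_le_iff)
  moreover have "L * norm (w - k) \<le> L * norm (w - g) + L * norm (g - k)"
    using mult_left_mono[OF norm_triangle_ineq[of "w - g" "g - k"] L_nonneg]
    by (simp add: distrib_left)
  moreover have "- (L\<^sup>2 / 2) \<le> (norm (w - g))\<^sup>2 / 2 - L * norm (w - g)"
    using zero_le_power2[of "norm (w - g) - L"] by (simp add: power2_eq_square algebra_simps)
  ultimately show "\<phi> k - L * norm (g - k) - L\<^sup>2 / 2 \<le> (norm (w - g))\<^sup>2 / 2 + \<phi> w"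
    by linarith
qed

lemma prox_objective_midpoint_bound:
  fixes \<phi> :: "'a::real_inner \<Rightarrow> real"
  assumes K: "convex K" and cvx: "convex_on K \<phi>" and ab: "a \<in> K" "b \<in> K"
    and m: "\<And>w. w \<in> K \<Longrightarrow> m \<le> (norm (w - g))\<^sup>2 / 2 + \<phi> w"
  shows "(dist a b)\<^sup>2 \<le> 4 * (((norm (a - g))\<^sup>2 / 2 + \<phi> a - m) + ((norm (b - g))\<^sup>2 / 2 + \<phi> b - m))"
proof -
  have "(1 - 1/2) *\<^sub>R a + (1/2) *\<^sub>R b \<in> K" using convexD_alt[OF K ab, of "1/2"] by simp
  moreover have "(1 - 1/2) *\<^sub>R a + (1/2) *\<^sub>R b = (1/2) *\<^sub>R (a + b)" by (simp add: algebra_simps)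
  ultimately have "m \<le> (norm ((1/2) *\<^sub>R (a + b) - g))\<^sup>2 / 2 + \<phi> ((1/2) *\<^sub>R (a + b))"
    using m by metis
  moreover have "\<phi> ((1 - 1/2) *\<^sub>R a + (1/2) *\<^sub>R b) \<le> (1 - 1/2) * \<phi> a + (1/2) * \<phi> b"
    using convex_onD[OF cvx, of "1/2" a b] ab by simp
  then have "\<phi> ((1/2) *\<^sub>R (a + b)) \<le> (\<phi> a + \<phi> b) / 2" by (simp add: algebra_simps)
  ultimately show ?thesis
    using norm_midpoint_diff_sq[of a b g] unfolding dist_norm by argo
qed

lemma minimizing_sequence_Cauchy:
  fixes x :: "nat \<Rightarrow> 'a::metric_space" and F :: "'a \<Rightarrow> real"
  assumes lim: "(\<lambda>n. F (x n)) \<longlonglongrightarrow> m"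
    and bound: "\<And>p q. (dist (x p) (x q))\<^sup>2 \<le> 4 * ((F (x p) - m) + (F (x q) - m))"
  shows "Cauchy x"
proof (rule metric_CauchyI)
  fix e :: real assume "e > 0"
  then have "\<forall>\<^sub>F n in sequentially. F (x n) < m + e\<^sup>2 / 8"
    by (intro order_tendstoD(2)[OF lim]) simp
  then obtain N where N: "\<And>n. n \<ge> N \<Longrightarrow> F (x n) < m + e\<^sup>2 / 8"
    unfolding eventually_sequentially by blast
  have "dist (x p) (x q) < e" if "p \<ge> N" "q \<ge> N" for p q
  proof -
    have "(dist (x p) (x q))\<^sup>2 < e\<^sup>2"
      using bound[of p q] N[OF that(1)] N[OF that(2)] by argo
    then show ?thesis using \<open>e > 0\<close> by (simp add: power_less_imp_less_base)
  qed
  then show "\<exists>N. \<forall>p\<ge>N. \<forall>q\<ge>N. dist (x p) (x q) < e" by blast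
qed

lemma prox_objective_minimizer_exists:
  fixes K :: "'a::{real_inner,complete_space} set" and \<phi> :: "'a \<Rightarrow> real"
  assumes K: "closed K" "convex K" "K \<noteq> {}"
    and cvx: "convex_on K \<phi>" and lip: "L-lipschitz_on K \<phi>"
  obtains w where "w \<in> K" "\<And>v. v \<in> K \<Longrightarrow> (norm (w - g))\<^sup>2 / 2 + \<phi> w \<le> (norm (v - g))\<^sup>2 / 2 + \<phi> v"
proof -
  define F where "F w = (norm (w - g))\<^sup>2 / 2 + \<phi> w" for w
  define m where "m = Inf (F ` K)"
  obtain k where "k \<in> K" using K(3) by blast
  then have bdd: "bdd_below (F ` K)"
    unfolding F_def[abs_def] by (rule prox_objective_bdd_below[OF lip])
  then have m_le: "m \<le> F w" if "w \<in> K" for w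
    unfolding m_def using that by (simp add: cInf_lower)
  obtain y where y: "\<And>n. y n \<in> F ` K" and "y \<longlonglongrightarrow> m"
    using closure_contains_Inf[OF _ bdd] K(3) unfolding m_def closure_sequential by blast
  moreover have "\<exists>w. w \<in> K \<and> F w = y n" for n using y[of n] by (metis imageE)
  then obtain x where x: "\<And>n. x n \<in> K" and "\<And>n. F (x n) = y n" by metis
  ultimately have Fx: "(\<lambda>n. F (x n)) \<longlonglongrightarrow> m" by simp
  have "Cauchy x"
  proof (rule minimizing_sequence_Cauchy[where F=F and x=x, OF Fx])
    show "(dist (x p) (x q))\<^sup>2 \<le> 4 * ((F (x p) - m) + (F (x q) - m))" for p q
      unfolding F_def by (rule prox_objective_midpoint_bound[OF K(2) cvx x x m_le[unfolded F_def]])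
  qed
  then obtain w where xw: "x \<longlonglongrightarrow> w" using Cauchy_convergent_iff convergent_def by blast
  have w: "w \<in> K" using closed_sequentially[OF K(1) x xw] .
  have "continuous_on K F"
    unfolding F_def using lipschitz_on_continuous_on[OF lip] by (intro continuous_intros) simp_all
  then have "(\<lambda>n. F (x n)) \<longlonglongrightarrow> F w"
    by (intro continuous_on_tendsto_compose[OF _ xw w] always_eventually allI x)
  then have "F w = m" using Fx by (rule LIMSEQ_unique)
  then show thesis using that[OF w] m_le unfolding F_def by simp
qed

lemma prox_minimizer_variational_inequality:
  fixes \<phi> :: "'a::real_inner \<Rightarrow> real"
  assumes K: "convex K" and cvx: "convex_on K \<phi>" and w: "w \<in> K" and v: "v \<in> K"
    and min: "\<And>v. v \<in> K \<Longrightarrow> (norm (w - g))\<^sup>2 / 2 + \<phi> w \<le> (norm (v - g))\<^sup>2 / 2 + \<phi> v"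
  shows "0 \<le> (w - g) \<bullet> (v - w) + \<phi> v - \<phi> w"
proof (rule ccontr)
  define Q where "Q = (w - g) \<bullet> (v - w) + \<phi> v - \<phi> w"
  define D where "D = (norm (v - w))\<^sup>2"
  assume "\<not> ?thesis"
  then have Q: "Q < 0" unfolding Q_def by simp
  have D: "0 \<le> D" unfolding D_def by simp
  \<comment> \<open>moving from \<open>w\<close> towards \<open>v\<close> by a small step \<open>s\<close> changes the objective by \<open>s * (Q + s/2 * D)\<close>\<close>
  define s where "s = min 1 (- Q / (D + 1))"
  have s: "0 < s" "s \<le> 1" using Q D unfolding s_def by (auto simp: field_simps)
  have "s * D \<le> (- Q / (D + 1)) * D" using D unfolding s_def by (intro mult_right_mono) auto
  also have "\<dots> \<le> - Q" using D Q by (simp add: field_simps)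
  finally have sD: "Q + s / 2 * D < 0" using Q by simp
  have "(norm (w - g))\<^sup>2 / 2 + \<phi> w
      \<le> (norm ((1 - s) *\<^sub>R w + s *\<^sub>R v - g))\<^sup>2 / 2 + \<phi> ((1 - s) *\<^sub>R w + s *\<^sub>R v)"
    using s by (intro min convexD[OF K w v]) auto
  moreover have "\<phi> ((1 - s) *\<^sub>R w + s *\<^sub>R v) \<le> (1 - s) * \<phi> w + s * \<phi> v"
    using convex_onD[OF cvx, of s w v] s w v by simp
  moreover have "(norm ((1 - s) *\<^sub>R w + s *\<^sub>R v - g))\<^sup>2
      = (norm (w - g))\<^sup>2 + 2 * (s * ((w - g) \<bullet> (v - w))) + s\<^sup>2 * D"
    unfolding norm_segment_diff_sq D_def by simp
  ultimately have "0 \<le> s * ((w - g) \<bullet> (v - w)) + s * \<phi> v - s * \<phi> w + s\<^sup>2 * D / 2"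
    by (simp add: algebra_simps)
  then have "0 \<le> s * (Q + s / 2 * D)"
    unfolding Q_def by (simp add: algebra_simps power2_eq_square)
  moreover have "s * (Q + s / 2 * D) < 0" using s(1) sD by (rule mult_pos_neg)
  ultimately show False by linarith
qed

lemma prox_map_exists:
  fixes K :: "'a::{real_inner,complete_space} set" and \<phi> :: "'a \<Rightarrow> real"
  assumes K: "closed K" "convex K" "K \<noteq> {}"
    and cvx: "convex_on K \<phi>" and lip: "L-lipschitz_on K \<phi>"
  obtains P where "\<And>g. P g \<in> K" and "\<And>g v. v \<in> K \<Longrightarrow> 0 \<le> (P g - g) \<bullet> (v - P g) + \<phi> v - \<phi> (P g)"
proof -
  have "\<exists>w. w \<in> K \<and> (\<forall>v\<in>K. 0 \<le> (w - g) \<bullet> (v - w) + \<phi> v - \<phi> w)" for g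
    using prox_objective_minimizer_exists[OF assms, of g]
      prox_minimizer_variational_inequality[OF K(2) cvx] by metis
  then obtain P where "\<And>g. P g \<in> K \<and> (\<forall>v\<in>K. 0 \<le> (P g - g) \<bullet> (v - P g) + \<phi> v - \<phi> (P g))"
    by metis
  with that show thesis by blast
qed

lemma prox_nonexpansive:
  fixes w1 w2 g1 g2 :: "'a::real_inner"
  assumes "0 \<le> (w1 - g1) \<bullet> (w2 - w1) + \<phi> w2 - \<phi> w1"
    and "0 \<le> (w2 - g2) \<bullet> (w1 - w2) + \<phi> w1 - \<phi> w2"
  shows "norm (w1 - w2) \<le> norm (g1 - g2)"
proof -
  have "(w1 - g1) \<bullet> (w2 - w1) + (w2 - g2) \<bullet> (w1 - w2)
      = (g1 - g2) \<bullet> (w1 - w2) - (w1 - w2) \<bullet> (w1 - w2)"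
    by (simp add: inner_diff_left inner_diff_right inner_commute algebra_simps)
  then have "norm (w1 - w2) * norm (w1 - w2) \<le> (g1 - g2) \<bullet> (w1 - w2)"
    using assms by (simp add: power2_norm_eq_inner flip: power2_eq_square)
  also have "\<dots> \<le> norm (g1 - g2) * norm (w1 - w2)"
    using Cauchy_Schwarz_ineq2 abs_ge_self order_trans by blast
  finally show ?thesis
    by (cases "w1 = w2") (auto simp: mult_le_cancel_right)
qed

lemma strongly_monotone_step_contraction:
  fixes d e :: "'a::real_inner"
  assumes mono: "m * (norm d)\<^sup>2 \<le> e \<bullet> d" and lip: "norm e \<le> L * norm d"
    and m: "0 \<le> m" and L: "0 < L"
  shows "(norm (d - (m / L\<^sup>2) *\<^sub>R e))\<^sup>2 \<le> (1 - m\<^sup>2 / L\<^sup>2) * (norm d)\<^sup>2"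
proof -
  define \<rho> where "\<rho> = m / L\<^sup>2"
  have \<rho>: "0 \<le> \<rho>" unfolding \<rho>_def using m by simp
  have "(norm e)\<^sup>2 \<le> L\<^sup>2 * (norm d)\<^sup>2"
    using power_mono[OF lip norm_ge_zero, of 2] by (simp add: power_mult_distrib)
  then have "\<rho>\<^sup>2 * (norm e)\<^sup>2 \<le> \<rho>\<^sup>2 * (L\<^sup>2 * (norm d)\<^sup>2)"
    by (simp add: mult_left_mono)
  moreover have "\<rho> * (m * (norm d)\<^sup>2) \<le> \<rho> * (e \<bullet> d)"
    using mono \<rho> by (rule mult_left_mono)
  moreover have "(norm (d - \<rho> *\<^sub>R e))\<^sup>2 = (norm d)\<^sup>2 - 2 * \<rho> * (e \<bullet> d) + \<rho>\<^sup>2 * (norm e)\<^sup>2"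
    unfolding power2_norm_eq_inner
    by (simp add: inner_diff_left inner_diff_right inner_commute power2_eq_square algebra_simps)
  ultimately have "(norm (d - \<rho> *\<^sub>R e))\<^sup>2
      \<le> (norm d)\<^sup>2 - 2 * \<rho> * (m * (norm d)\<^sup>2) + \<rho>\<^sup>2 * (L\<^sup>2 * (norm d)\<^sup>2)"
    by linarith
  also have "\<dots> = (1 - m\<^sup>2 / L\<^sup>2) * (norm d)\<^sup>2"
    unfolding \<rho>_def using L by (simp add: field_simps power2_eq_square)
  finally show ?thesis unfolding \<rho>_def .
qed

lemma forward_backward_contraction:
  fixes A P :: "'a::real_inner \<Rightarrow> 'a"
  assumes P: "\<And>g1 g2. norm (P g1 - P g2) \<le> norm (g1 - g2)"
    and m: "0 \<le> m" and A_mono: "\<And>u v. m * (norm (u - v))\<^sup>2 \<le> (A u - A v) \<bullet> (u - v)"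
    and LA: "0 < L\<^sub>A" and A_lip: "\<And>u v. norm (A u - A v) \<le> L\<^sub>A * norm (u - v)"
  shows "dist (P (x - (m / L\<^sub>A\<^sup>2) *\<^sub>R (A x + h))) (P (y - (m / L\<^sub>A\<^sup>2) *\<^sub>R (A y + h)))
    \<le> sqrt (max 0 (1 - m\<^sup>2 / L\<^sub>A\<^sup>2)) * dist x y"
proof -
  define \<rho> c where "\<rho> = m / L\<^sub>A\<^sup>2" and "c = sqrt (max 0 (1 - m\<^sup>2 / L\<^sub>A\<^sup>2))"
  \<comment> \<open>\<open>m \<le> L\<^sub>A\<close> unless the space is trivial; the \<open>max\<close> only keeps \<open>sqrt\<close> away from negative arguments\<close>
  have "norm (P (x - \<rho> *\<^sub>R (A x + h)) - P (y - \<rho> *\<^sub>R (A y + h)))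
      \<le> norm ((x - \<rho> *\<^sub>R (A x + h)) - (y - \<rho> *\<^sub>R (A y + h)))"
    by (rule P)
  also have "(x - \<rho> *\<^sub>R (A x + h)) - (y - \<rho> *\<^sub>R (A y + h)) = (x - y) - \<rho> *\<^sub>R (A x - A y)"
    by (simp add: algebra_simps)
  also have "norm \<dots> \<le> c * norm (x - y)"
  proof (rule power2_le_imp_le)
    have "(norm ((x - y) - \<rho> *\<^sub>R (A x - A y)))\<^sup>2 \<le> (1 - m\<^sup>2 / L\<^sub>A\<^sup>2) * (norm (x - y))\<^sup>2"
      unfolding \<rho>_def by (rule strongly_monotone_step_contraction[OF A_mono A_lip m LA])
    also have "\<dots> \<le> (c * norm (x - y))\<^sup>2"
      unfolding c_def power_mult_distrib by (intro mult_right_mono) auto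
    finally show "(norm ((x - y) - \<rho> *\<^sub>R (A x - A y)))\<^sup>2 \<le> (c * norm (x - y))\<^sup>2" .
  qed (simp add: c_def)
  finally show ?thesis unfolding \<rho>_def c_def by (simp add: dist_norm)
qed

lemma variational_inequality_exists:
  fixes K :: "'a::{real_inner,complete_space} set" and \<phi> :: "'a \<Rightarrow> real" and A :: "'a \<Rightarrow> 'a"
  assumes K: "closed K" "convex K" "K \<noteq> {}"
    and cvx: "convex_on K \<phi>" and lip: "L-lipschitz_on K \<phi>"
    and m: "0 < m" and A_mono: "\<And>u v. m * (norm (u - v))\<^sup>2 \<le> (A u - A v) \<bullet> (u - v)"
    and LA: "0 < L\<^sub>A" and A_lip: "\<And>u v. norm (A u - A v) \<le> L\<^sub>A * norm (u - v)"
  obtains w where "w \<in> K" "\<And>v. v \<in> K \<Longrightarrow> 0 \<le> (A w + h) \<bullet> (v - w) + \<phi> v - \<phi> w"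
proof -
  \<comment> \<open>a solution is a fixed point of the proximal-gradient map \<open>x \<mapsto> prox\<^sub>\<rho>\<^sub>\<phi> (x - \<rho> (A x + h))\<close>\<close>
  define \<rho> where "\<rho> = m / L\<^sub>A\<^sup>2"
  have \<rho>: "0 < \<rho>" unfolding \<rho>_def using m LA by simp
  have "convex_on K (\<lambda>x. \<rho> * \<phi> x)"
    using convex_on_cmul[OF less_imp_le[OF \<rho>] cvx] by simp
  moreover have "(\<rho> * L)-lipschitz_on K (\<lambda>x. \<rho> * \<phi> x)"
    using lipschitz_on_cmult_real[OF lip, of \<rho>] \<rho> by simp
  ultimately obtain P where P_mem: "\<And>g. P g \<in> K"
    and P_vi: "\<And>g v. v \<in> K \<Longrightarrow> 0 \<le> (P g - g) \<bullet> (v - P g) + \<rho> * \<phi> v - \<rho> * \<phi> (P g)"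
    using prox_map_exists[OF K] by blast
  have nonexpansive: "norm (P g1 - P g2) \<le> norm (g1 - g2)" for g1 g2
    by (rule prox_nonexpansive[where \<phi>="\<lambda>v. \<rho> * \<phi> v", OF P_vi[OF P_mem] P_vi[OF P_mem]])
  define c where "c = sqrt (max 0 (1 - m\<^sup>2 / L\<^sub>A\<^sup>2))"
  have "\<forall>x y. dist (P (x - \<rho> *\<^sub>R (A x + h))) (P (y - \<rho> *\<^sub>R (A y + h))) \<le> c * dist x y"
    unfolding \<rho>_def c_def by (intro allI forward_backward_contraction[OF nonexpansive less_imp_le[OF m] A_mono LA A_lip])
  moreover have "0 \<le> c" "c < 1"
    unfolding c_def using m LA by auto
  ultimately obtain x where x: "P (x - \<rho> *\<^sub>R (A x + h)) = x"
    using banach_fix_type[of c "\<lambda>x. P (x - \<rho> *\<^sub>R (A x + h))"] by blast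
  have "0 \<le> \<rho> * ((A x + h) \<bullet> (v - x) + \<phi> v - \<phi> x)" if "v \<in> K" for v
    using P_vi[OF that, of "x - \<rho> *\<^sub>R (A x + h)"] unfolding x by (simp add: algebra_simps)
  with that P_mem[of "x - \<rho> *\<^sub>R (A x + h)"] \<rho> show thesis
    unfolding x by (simp add: zero_le_mult_iff)
qed

section \<open>Sublinear functionals on a closed convex cone\<close>

text \<open>\<open>minorants K (j \<eta>)\<close> is the set \<open>C(\<eta>) = Cset j K \<eta>\<close> of the paper.\<close>

definition minorants :: "'a::real_inner set \<Rightarrow> ('a \<Rightarrow> real) \<Rightarrow> 'a set" where
  "minorants K \<phi> = {\<xi>. \<forall>v\<in>K. \<xi> \<bullet> v \<le> \<phi> v}"

locale sublinear_on_cone =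
  fixes K :: "'a::{real_inner,complete_space} set" and \<phi> :: "'a \<Rightarrow> real" and L :: real
  assumes closed: "closed K" and convex: "convex K" and cone: "cone K" and nonempty: "K \<noteq> {}"
    and convex_on: "convex_on K \<phi>"
    and homogeneous: "\<And>c v. 0 < c \<Longrightarrow> v \<in> K \<Longrightarrow> \<phi> (c *\<^sub>R v) = c * \<phi> v"
    and lipschitz: "L-lipschitz_on K \<phi>"
begin

lemma scaleR_mem: "0 \<le> c \<Longrightarrow> x \<in> K \<Longrightarrow> c *\<^sub>R x \<in> K"
  using cone unfolding cone_def by blast

lemma zero_mem: "0 \<in> K"
  using scaleR_mem[of 0] nonempty by auto

lemma add_mem:
  assumes "x \<in> K" "y \<in> K"
  shows "x + y \<in> K"
proof -
  have "(1/2) *\<^sub>R x + (1/2) *\<^sub>R y \<in> K" using convexD[OF convex assms] by simp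
  from scaleR_mem[OF _ this, of 2] show ?thesis by (simp add: scaleR_add_right)
qed

lemma zero [simp]: "\<phi> 0 = 0"
  using homogeneous[of 2 0] zero_mem by simp

lemma subadditive:
  assumes "x \<in> K" "y \<in> K"
  shows "\<phi> (x + y) \<le> \<phi> x + \<phi> y"
proof -
  have "\<phi> ((1/2) *\<^sub>R x + (1/2) *\<^sub>R y) \<le> (1/2) * \<phi> x + (1/2) * \<phi> y"
    using convex_onD[OF convex_on, of "1/2" x y] assms by simp
  moreover have "\<phi> (x + y) = 2 * \<phi> ((1/2) *\<^sub>R x + (1/2) *\<^sub>R y)"
    using homogeneous[of 2 "(1/2) *\<^sub>R x + (1/2) *\<^sub>R y"] convexD[OF convex assms, of "1/2" "1/2"]
    by (simp add: scaleR_add_right)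
  ultimately show ?thesis by simp
qed

lemma L_nonneg: "0 \<le> L"
  using lipschitz by (simp add: lipschitz_on_def)

lemma diff_le:
  assumes "x \<in> K" "y \<in> K"
  shows "\<phi> x - \<phi> y \<le> L * norm (x - y)"
  using lipschitz_onD[OF lipschitz assms] by (simp add: dist_norm dist_real_def abs_le_iff)

lemma variational_inequality_iff_minorant:
  assumes w: "w \<in> K"
  shows "(\<forall>v\<in>K. 0 \<le> p \<bullet> (v - w) + \<phi> v - \<phi> w) \<longleftrightarrow> - p \<in> minorants K \<phi> \<and> - p \<bullet> w = \<phi> w"
proof
  assume vi: "\<forall>v\<in>K. 0 \<le> p \<bullet> (v - w) + \<phi> v - \<phi> w"
  have "- p \<bullet> v \<le> \<phi> v" if v: "v \<in> K" for v
  proof -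
    have "0 \<le> p \<bullet> ((w + v) - w) + \<phi> (w + v) - \<phi> w" using vi add_mem[OF w v] by blast
    then show ?thesis using subadditive[OF w v] by simp
  qed
  moreover have "0 \<le> p \<bullet> (0 - w) + \<phi> 0 - \<phi> w" using vi zero_mem by blast
  then have "\<phi> w \<le> - p \<bullet> w" by simp
  ultimately show "- p \<in> minorants K \<phi> \<and> - p \<bullet> w = \<phi> w"
    using w by (force simp: minorants_def)
next
  assume "- p \<in> minorants K \<phi> \<and> - p \<bullet> w = \<phi> w"
  then show "\<forall>v\<in>K. 0 \<le> p \<bullet> (v - w) + \<phi> v - \<phi> w"
    by (auto simp: minorants_def inner_diff_right)
qed

lemma moreau_decomposition:
  obtains w where "w \<in> K" "g - w \<in> minorants K \<phi>" "(g - w) \<bullet> w = \<phi> w"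
proof -
  obtain P where P: "\<And>g. P g \<in> K" "\<And>g v. v \<in> K \<Longrightarrow> 0 \<le> (P g - g) \<bullet> (v - P g) + \<phi> v - \<phi> (P g)"
    using prox_map_exists[OF closed convex nonempty convex_on lipschitz] by blast
  then have "g - P g \<in> minorants K \<phi> \<and> (g - P g) \<bullet> P g = \<phi> (P g)"
    using variational_inequality_iff_minorant[OF P(1)[of g], of "P g - g"] P(2) by simp
  with P(1) that show thesis by blast
qed

lemma decomposition_inner:
  assumes "(t *\<^sub>R v - w) \<bullet> w = \<phi> w"
  shows "t * ((t *\<^sub>R v - w) \<bullet> v) = \<phi> w + (norm (t *\<^sub>R v - w))\<^sup>2"
proof -
  have "t * ((t *\<^sub>R v - w) \<bullet> v) = (t *\<^sub>R v - w) \<bullet> (w + (t *\<^sub>R v - w))"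
    by (simp add: algebra_simps)
  also have "\<dots> = \<phi> w + (norm (t *\<^sub>R v - w))\<^sup>2"
    by (simp only: inner_add_right assms power2_norm_eq_inner)
  finally show ?thesis .
qed

lemma minorant_inner_lower_bound:
  assumes v: "v \<in> K" and t: "0 < t"
  obtains \<xi> where "\<xi> \<in> minorants K \<phi>" "\<phi> v - L\<^sup>2 / t \<le> \<xi> \<bullet> v"
proof -
  obtain w where w: "w \<in> K" and \<xi>: "t *\<^sub>R v - w \<in> minorants K \<phi>" and \<xi>w: "(t *\<^sub>R v - w) \<bullet> w = \<phi> w"
    using moreau_decomposition .
  define n where "n = norm (t *\<^sub>R v - w)"
  have tv: "t *\<^sub>R v \<in> K" using scaleR_mem t v by simp
  have "(t *\<^sub>R v - w) \<bullet> (t *\<^sub>R v) \<le> \<phi> (t *\<^sub>R v)"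
    using \<xi> tv unfolding minorants_def by blast
  then have "t * ((t *\<^sub>R v - w) \<bullet> v) \<le> \<phi> (t *\<^sub>R v)" by simp
  then have "n\<^sup>2 \<le> \<phi> (t *\<^sub>R v) - \<phi> w"
    using decomposition_inner[OF \<xi>w] unfolding n_def by linarith
  also have "\<dots> \<le> L * n" unfolding n_def by (rule diff_le[OF tv w])
  finally have "n \<le> L"
    using L_nonneg by (cases "n = 0") (auto simp: power2_eq_square n_def mult_le_cancel_right_pos)
  then have "\<phi> (t *\<^sub>R v) - L\<^sup>2 \<le> \<phi> w"
    using diff_le[OF tv w] mult_left_mono[OF \<open>n \<le> L\<close> L_nonneg]
    unfolding n_def by (simp add: power2_eq_square)
  then have "t * \<phi> v - L\<^sup>2 \<le> t * ((t *\<^sub>R v - w) \<bullet> v)"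
    using decomposition_inner[OF \<xi>w] homogeneous[OF t v] zero_le_power2[of "norm (t *\<^sub>R v - w)"]
    by linarith
  then have "\<phi> v - L\<^sup>2 / t \<le> (t *\<^sub>R v - w) \<bullet> v"
    using t by (simp add: field_simps)
  with \<xi> that show thesis by blast
qed

lemma decomposition_value_lower_bound:
  assumes w: "w \<in> K" and \<xi>w: "(t *\<^sub>R v - w) \<bullet> w = \<phi> w" and t: "0 \<le> t"
  shows "- (L * (t * norm v + L)) \<le> \<phi> w"
proof -
  have \<phi>w: "- (L * norm w) \<le> \<phi> w"
    using diff_le[OF zero_mem w] by simp
  have "(norm w)\<^sup>2 = t * (v \<bullet> w) - \<phi> w"
    using \<xi>w by (simp add: inner_diff_left power2_norm_eq_inner)
  also have "\<dots> \<le> t * (norm v * norm w) + L * norm w"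
    using mult_left_mono[OF norm_cauchy_schwarz[of v w] t] \<phi>w by linarith
  finally have "norm w * norm w \<le> norm w * (t * norm v + L)"
    by (simp add: power2_eq_square algebra_simps)
  then have "norm w \<le> t * norm v + L"
    using L_nonneg t by (cases "w = 0") (auto simp: mult_le_cancel_left_pos)
  then show ?thesis
    using \<phi>w mult_left_mono[OF _ L_nonneg, of "norm w" "t * norm v + L"] by linarith
qed

lemma decomposition_remainder_lower_bound:
  assumes w: "w \<in> K" and t: "0 < t"
  shows "t * infdist v K \<le> norm (t *\<^sub>R v - w)"
proof -
  have "infdist v K \<le> norm (v - (1 / t) *\<^sub>R w)"
    using infdist_le[OF scaleR_mem[OF _ w], of "1 / t" v] t by (simp add: dist_norm)
  also have "t *\<^sub>R (v - (1 / t) *\<^sub>R w) = t *\<^sub>R v - w"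
    using t by (simp add: scaleR_diff_right)
  then have "norm (v - (1 / t) *\<^sub>R w) = norm (t *\<^sub>R v - w) / t"
    using t by (metis norm_scaleR abs_of_pos nonzero_mult_div_cancel_left less_irrefl)
  finally show ?thesis using t by (simp add: field_simps)
qed

lemma minorant_inner_unbounded_outside:
  assumes v: "v \<notin> K"
  obtains \<xi> where "\<xi> \<in> minorants K \<phi>" "M \<le> \<xi> \<bullet> v"
proof -
  define e where "e = infdist v K"
  have e: "0 < e" unfolding e_def by (rule infdist_pos_not_in_closed[OF closed nonempty v])
  define t where "t = max 1 ((\<bar>M\<bar> + L * norm v + L\<^sup>2) / e\<^sup>2)"
  have t: "1 \<le> t" unfolding t_def by simp
  have "(\<bar>M\<bar> + L * norm v + L\<^sup>2) / e\<^sup>2 \<le> t" unfolding t_def by simp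
  then have te: "\<bar>M\<bar> + L * norm v + L\<^sup>2 \<le> t * e\<^sup>2" using e by (simp add: divide_le_eq)
  obtain w where w: "w \<in> K" and \<xi>: "t *\<^sub>R v - w \<in> minorants K \<phi>" and \<xi>w: "(t *\<^sub>R v - w) \<bullet> w = \<phi> w"
    using moreau_decomposition .
  \<comment> \<open>for \<open>\<xi> = t v - w\<close>, \<open>t * (\<xi> \<bullet> v) = \<phi> w + \<parallel>\<xi>\<parallel>\<^sup>2\<close> grows quadratically in \<open>t\<close>:\<close>
  \<comment> \<open>\<open>\<parallel>\<xi>\<parallel> \<ge> t * infdist v K\<close>, while \<open>\<phi> w\<close> decreases at most linearly\<close>
  have "t * e \<le> norm (t *\<^sub>R v - w)"
    unfolding e_def using decomposition_remainder_lower_bound[OF w] t by simp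
  then have "t\<^sup>2 * e\<^sup>2 \<le> (norm (t *\<^sub>R v - w))\<^sup>2"
    using e t by (simp add: power_mult_distrib[symmetric] power_mono)
  moreover have "- (L * (t * norm v + L)) \<le> \<phi> w"
    using decomposition_value_lower_bound[OF w \<xi>w] t by simp
  moreover have "t * (- (L * norm v) - L\<^sup>2 + t * e\<^sup>2) = - (L * (t * norm v)) - t * L\<^sup>2 + t\<^sup>2 * e\<^sup>2"
    by (simp add: algebra_simps power2_eq_square)
  moreover have "L * (t * norm v + L) = L * (t * norm v) + L\<^sup>2"
    by (simp add: algebra_simps power2_eq_square)
  moreover have "1 * L\<^sup>2 \<le> t * L\<^sup>2"
    using t by (intro mult_right_mono) auto
  ultimately have "t * (- (L * norm v) - L\<^sup>2 + t * e\<^sup>2) \<le> t * ((t *\<^sub>R v - w) \<bullet> v)"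
    using decomposition_inner[OF \<xi>w] by linarith
  then have "- (L * norm v) - L\<^sup>2 + t * e\<^sup>2 \<le> (t *\<^sub>R v - w) \<bullet> v"
    using t by simp
  with te have "M \<le> (t *\<^sub>R v - w) \<bullet> v" by linarith
  with \<xi> that show thesis by blast
qed

text \<open>The support function of \<open>minorants K \<phi>\<close> is \<open>\<phi>\<close> on \<open>K\<close> and \<open>+\<infinity>\<close> off \<open>K\<close>, in the following form.\<close>

lemma maximizer_support:
  assumes \<xi>0: "\<xi>0 \<in> minorants K \<phi>" and max: "\<And>\<xi>. \<xi> \<in> minorants K \<phi> \<Longrightarrow> \<xi> \<bullet> v \<le> \<xi>0 \<bullet> v"
  shows "v \<in> K" and "\<xi>0 \<bullet> v = \<phi> v"
proof -
  show v: "v \<in> K"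
  proof (rule ccontr)
    assume "v \<notin> K"
    then obtain \<xi> where "\<xi> \<in> minorants K \<phi>" "\<xi>0 \<bullet> v + 1 \<le> \<xi> \<bullet> v"
      by (rule minorant_inner_unbounded_outside)
    with max show False by fastforce
  qed
  have "\<phi> v \<le> \<xi>0 \<bullet> v + e" if e: "0 < e" for e
  proof -
    have L: "0 < L\<^sup>2 + 1" by (simp add: add_nonneg_pos)
    then have "0 < (L\<^sup>2 + 1) / e" using e by simp
    then obtain \<xi> where \<xi>: "\<xi> \<in> minorants K \<phi>" and "\<phi> v - L\<^sup>2 / ((L\<^sup>2 + 1) / e) \<le> \<xi> \<bullet> v"
      by (rule minorant_inner_lower_bound[OF v])
    moreover have "L\<^sup>2 / ((L\<^sup>2 + 1) / e) \<le> (L\<^sup>2 + 1) / ((L\<^sup>2 + 1) / e)"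
      using \<open>0 < (L\<^sup>2 + 1) / e\<close> by (intro divide_right_mono) auto
    moreover have "(L\<^sup>2 + 1) / ((L\<^sup>2 + 1) / e) = e"
      using e L by simp
    ultimately show ?thesis using max[OF \<xi>] by linarith
  qed
  then have "\<phi> v \<le> \<xi>0 \<bullet> v" by (rule field_le_epsilon)
  moreover have "\<xi>0 \<bullet> v \<le> \<phi> v" using \<xi>0 v by (simp add: minorants_def)
  ultimately show "\<xi>0 \<bullet> v = \<phi> v" by simp
qed

lemma normal_cone_iff_variational_inequality:
  "- w \<in> normal_cone ((\<lambda>\<xi>. a - \<xi>) ` minorants K \<phi>) y
    \<longleftrightarrow> w \<in> K \<and> (\<forall>v\<in>K. 0 \<le> (y - a) \<bullet> (v - w) + \<phi> v - \<phi> w)"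
proof
  assume nc: "- w \<in> normal_cone ((\<lambda>\<xi>. a - \<xi>) ` minorants K \<phi>) y"
  then have \<xi>: "a - y \<in> minorants K \<phi>"
    by (auto simp: normal_cone_def split: if_splits)
  have "\<xi> \<bullet> w \<le> (a - y) \<bullet> w" if "\<xi> \<in> minorants K \<phi>" for \<xi>
    using nc that by (force simp: normal_cone_def inner_diff_right inner_commute split: if_splits)
  with maximizer_support[OF \<xi>] have "w \<in> K" "(a - y) \<bullet> w = \<phi> w" by auto
  with variational_inequality_iff_minorant[of w "y - a"] \<xi>
  show "w \<in> K \<and> (\<forall>v\<in>K. 0 \<le> (y - a) \<bullet> (v - w) + \<phi> v - \<phi> w)" by simp
next
  assume "w \<in> K \<and> (\<forall>v\<in>K. 0 \<le> (y - a) \<bullet> (v - w) + \<phi> v - \<phi> w)"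
  then have w: "w \<in> K" and \<xi>: "a - y \<in> minorants K \<phi>" and \<xi>w: "(a - y) \<bullet> w = \<phi> w"
    using variational_inequality_iff_minorant[of w "y - a"] by auto
  have "y \<in> (\<lambda>\<xi>. a - \<xi>) ` minorants K \<phi>"
    using \<xi> by (intro image_eqI[of _ _ "a - y"]) auto
  moreover have "- w \<bullet> ((a - \<xi>) - y) \<le> 0" if "\<xi> \<in> minorants K \<phi>" for \<xi>
  proof -
    have "\<xi> \<bullet> w \<le> \<phi> w" using that w by (simp add: minorants_def)
    moreover have "- w \<bullet> ((a - \<xi>) - y) = \<xi> \<bullet> w - (a - y) \<bullet> w"
      by (simp add: inner_diff_right inner_diff_left inner_commute)
    ultimately show ?thesis using \<xi>w by linarith
  qed
  ultimately show "- w \<in> normal_cone ((\<lambda>\<xi>. a - \<xi>) ` minorants K \<phi>) y"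
    by (auto simp: normal_cone_def)
qed

end

section \<open>The history-dependent sweeping process\<close>

locale sweeping_process = time_interval I T for I :: "real set" and T :: real +
  fixes K :: "'a::{real_inner,complete_space} set"
    and A B :: "'a \<Rightarrow> 'a" and m\<^sub>A L\<^sub>A :: real
    and f :: "real \<Rightarrow> 'a" and u\<^sub>0 :: 'a
    and S :: "(real \<Rightarrow> 'a) \<Rightarrow> (real \<Rightarrow> 'a)"
    and j :: "'a \<Rightarrow> 'a \<Rightarrow> real" and \<alpha>\<^sub>j :: real
  assumes K_ne: "K \<noteq> {}" and K_closed: "closed K" and K_convex: "convex K"
    and K_cone: "cone K"
    and mA: "m\<^sub>A > 0" and LA: "L\<^sub>A > 0"
    and A_mono: "\<And>u v. (A u - A v) \<bullet> (u - v) \<ge> m\<^sub>A * (norm (u - v))\<^sup>2"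
    and A_lip: "\<And>u v. norm (A u - A v) \<le> L\<^sub>A * norm (u - v)"
    and f_cont: "continuous_on I f"
    and B_lip: "\<exists>L. L-lipschitz_on UNIV B"
    and S_maps: "\<And>u. continuous_on I u \<Longrightarrow> continuous_on I (S u)"
    and S_hist: "history_dependent I S"
    and j_convex: "\<And>\<eta>. convex_on K (j \<eta>)"
    and j_homog: "\<And>\<eta> c v. c > 0 \<Longrightarrow> v \<in> K \<Longrightarrow> j \<eta> (c *\<^sub>R v) = c * j \<eta> v"
    and j_lip: "\<And>\<eta>. \<exists>L. L-lipschitz_on K (j \<eta>)"
    and alpha: "\<alpha>\<^sub>j \<ge> 0"
    and j_cross: "\<And>\<eta>1 \<eta>2 v1 v2. v1 \<in> K \<Longrightarrow> v2 \<in> K \<Longrightarrow>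
        j \<eta>1 v2 - j \<eta>1 v1 + j \<eta>2 v1 - j \<eta>2 v2 \<le> \<alpha>\<^sub>j * norm (\<eta>1 - \<eta>2) * norm (v1 - v2)"
begin

lemma j_sublinear_on_cone:
  obtains L where "sublinear_on_cone K (j \<eta>) L"
  using j_lip[of \<eta>] K_closed K_convex K_cone K_ne j_convex j_homog
  by (metis sublinear_on_cone.intro)

definition solves_vi :: "'a \<Rightarrow> 'a \<Rightarrow> 'a \<Rightarrow> bool" where
  "solves_vi \<eta> h w \<longleftrightarrow> w \<in> K \<and> (\<forall>v\<in>K. 0 \<le> (A w + h) \<bullet> (v - w) + j \<eta> v - j \<eta> w)"

lemma solves_vi_exists: "\<exists>w. solves_vi \<eta> h w"
proof -
  obtain L where "L-lipschitz_on K (j \<eta>)" using j_lip by blast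
  from variational_inequality_exists[OF K_closed K_convex K_ne j_convex this mA A_mono LA A_lip]
  show ?thesis unfolding solves_vi_def by metis
qed

lemma solves_vi_lipschitz:
  assumes "solves_vi \<eta>1 h1 w1" "solves_vi \<eta>2 h2 w2"
  shows "m\<^sub>A * norm (w1 - w2) \<le> norm (h1 - h2) + \<alpha>\<^sub>j * norm (\<eta>1 - \<eta>2)"
proof -
  define d where "d = w1 - w2"
  have w: "w1 \<in> K" "w2 \<in> K"
    and vi1: "0 \<le> (A w1 + h1) \<bullet> (w2 - w1) + j \<eta>1 w2 - j \<eta>1 w1"
    and vi2: "0 \<le> (A w2 + h2) \<bullet> (w1 - w2) + j \<eta>2 w1 - j \<eta>2 w2"
    using assms unfolding solves_vi_def by auto
  \<comment> \<open>adding the two inequalities, the \<open>j\<close>-terms are controlled by the cross condition\<close>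
  have "(A w1 + h1) \<bullet> (w2 - w1) + (A w2 + h2) \<bullet> (w1 - w2) = - ((A w1 - A w2) \<bullet> d) - (h1 - h2) \<bullet> d"
    unfolding d_def by (simp add: inner_diff_left inner_diff_right inner_add_left algebra_simps)
  moreover have "m\<^sub>A * (norm d)\<^sup>2 \<le> (A w1 - A w2) \<bullet> d" unfolding d_def by (rule A_mono)
  moreover have "- (norm (h1 - h2) * norm d) \<le> (h1 - h2) \<bullet> d"
    using Cauchy_Schwarz_ineq2[of "h1 - h2" d] by (simp add: abs_le_iff)
  moreover have "j \<eta>1 w2 - j \<eta>1 w1 + j \<eta>2 w1 - j \<eta>2 w2 \<le> \<alpha>\<^sub>j * norm (\<eta>1 - \<eta>2) * norm d"
    unfolding d_def using j_cross w by blast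
  ultimately have "norm d * (m\<^sub>A * norm d) \<le> norm d * (norm (h1 - h2) + \<alpha>\<^sub>j * norm (\<eta>1 - \<eta>2))"
    using vi1 vi2 by (simp add: power2_eq_square algebra_simps)
  then show ?thesis
    unfolding d_def[symmetric] using mA alpha
    by (cases "d = 0") (auto simp: mult_le_cancel_left_pos)
qed

definition vi_solution :: "'a \<Rightarrow> 'a \<Rightarrow> 'a" where
  "vi_solution \<eta> h = (THE w. solves_vi \<eta> h w)"

lemma solves_vi_unique: "solves_vi \<eta> h w1 \<Longrightarrow> solves_vi \<eta> h w2 \<Longrightarrow> w1 = w2"
  using solves_vi_lipschitz[of \<eta> h w1 \<eta> h w2] mA by (simp add: mult_le_0_iff)

lemma solves_vi_vi_solution: "solves_vi \<eta> h (vi_solution \<eta> h)"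
  unfolding vi_solution_def using solves_vi_exists solves_vi_unique by (metis theI)

lemma vi_solution_eqI: "solves_vi \<eta> h w \<Longrightarrow> vi_solution \<eta> h = w"
  using solves_vi_vi_solution solves_vi_unique by blast

lemma vi_solution_mem: "vi_solution \<eta> h \<in> K"
  using solves_vi_vi_solution unfolding solves_vi_def by blast

lemma continuous_on_vi_solution: "continuous_on UNIV (\<lambda>p. vi_solution (fst p) (snd p))"
proof (rule lipschitz_on_continuous_on, rule lipschitz_onI)
  fix p q :: "'a \<times> 'a"
  have "m\<^sub>A * norm (vi_solution (fst p) (snd p) - vi_solution (fst q) (snd q))
      \<le> norm (snd p - snd q) + \<alpha>\<^sub>j * norm (fst p - fst q)"
    by (rule solves_vi_lipschitz[OF solves_vi_vi_solution solves_vi_vi_solution])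
  also have "\<dots> \<le> (1 + \<alpha>\<^sub>j) * norm (p - q)"
  proof -
    have "norm (fst (p - q)) \<le> norm (p - q)" "norm (snd (p - q)) \<le> norm (p - q)"
      by (metis norm_fst_le prod.collapse) (metis norm_snd_le prod.collapse)
    with alpha show ?thesis by (simp add: algebra_simps mult_left_mono add_mono)
  qed
  finally show "dist (vi_solution (fst p) (snd p)) (vi_solution (fst q) (snd q)) \<le> (1 + \<alpha>\<^sub>j) / m\<^sub>A * dist p q"
    using mA by (simp add: dist_norm field_simps)
qed (use mA alpha in simp)

lemma normal_cone_iff_solves_vi:
  "- w \<in> normal_cone (Ct f j K \<eta> t) (A w + r) \<longleftrightarrow> solves_vi \<eta> (r - f t) w"
proof -
  obtain L where "sublinear_on_cone K (j \<eta>) L" by (rule j_sublinear_on_cone)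
  moreover have "Ct f j K \<eta> t = (\<lambda>\<xi>. f t - \<xi>) ` minorants K (j \<eta>)"
    by (auto simp: Ct_def Cset_def Jfun_def minorants_def)
  ultimately show ?thesis
    by (simp add: sublinear_on_cone.normal_cone_iff_variational_inequality solves_vi_def
        algebra_simps)
qed

definition velocity :: "(real \<Rightarrow> 'a) \<Rightarrow> real \<Rightarrow> 'a" where
  "velocity u s = vi_solution (u s) (B (u s) + S u s - f s)"

definition picard :: "(real \<Rightarrow> 'a) \<Rightarrow> real \<Rightarrow> 'a" where
  "picard u t = u\<^sub>0 + integral {0..t} (velocity u)"

lemma continuous_on_velocity:
  assumes u: "continuous_on I u"
  shows "continuous_on I (velocity u)"
proof -
  have "continuous_on UNIV B"
    using B_lip lipschitz_on_continuous_on by blast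
  then have "continuous_on I (\<lambda>s. (u s, B (u s) + S u s - f s))"
    using u by (intro continuous_intros S_maps f_cont continuous_on_compose2[OF _ u]) auto
  from continuous_on_compose2[OF continuous_on_vi_solution this]
  show ?thesis unfolding velocity_def by simp
qed

lemma picard_has_vector_derivative:
  assumes u: "continuous_on I u" and b: "{0..b} \<subseteq> I" and t: "t \<in> {0..b}"
  shows "(picard u has_vector_derivative velocity u t) (at t within {0..b})"
proof -
  have "continuous_on {0..b} (velocity u)"
    using continuous_on_subset[OF continuous_on_velocity[OF u] b] .
  from integral_has_vector_derivative_complete[OF this t]
  show ?thesis
    unfolding picard_def[abs_def] by (intro derivative_eq_intros) auto
qed

lemma continuous_on_picard:
  assumes u: "continuous_on I u"
  shows "continuous_on I (picard u)"
proof (rule continuous_on_IccI)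
  fix b :: real assume "{0..b} \<subseteq> I"
  with picard_has_vector_derivative[OF u] show "continuous_on {0..b} (picard u)"
    unfolding continuous_on_eq_continuous_within
    using has_vector_derivative_continuous by blast
qed

lemma velocity_diff_le:
  assumes L_B: "L_B-lipschitz_on UNIV B"
  shows "m\<^sub>A * norm (velocity u s - velocity v s)
    \<le> (L_B + \<alpha>\<^sub>j) * norm (u s - v s) + norm (S u s - S v s)"
proof -
  have "m\<^sub>A * norm (velocity u s - velocity v s)
      \<le> norm ((B (u s) + S u s - f s) - (B (v s) + S v s - f s)) + \<alpha>\<^sub>j * norm (u s - v s)"
    unfolding velocity_def by (rule solves_vi_lipschitz[OF solves_vi_vi_solution solves_vi_vi_solution])
  also have "norm ((B (u s) + S u s - f s) - (B (v s) + S v s - f s))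
      \<le> norm (B (u s) - B (v s)) + norm (S u s - S v s)"
    using norm_triangle_ineq[of "B (u s) - B (v s)" "S u s - S v s"] by (simp add: algebra_simps)
  also have "norm (B (u s) - B (v s)) \<le> L_B * norm (u s - v s)"
    using lipschitz_onD[OF L_B] by (simp add: dist_norm)
  finally show ?thesis by (simp add: algebra_simps)
qed

lemma norm_picard_diff_le:
  assumes u: "continuous_on I u" and v: "continuous_on I v" and t: "{0..t} \<subseteq> I"
  shows "norm (picard u t - picard v t) \<le> integral {0..t} (\<lambda>s. norm (velocity u s - velocity v s))"
proof -
  have vel_u: "continuous_on {0..t} (velocity u)" and vel_v: "continuous_on {0..t} (velocity v)"
    using continuous_on_velocity[OF u] continuous_on_velocity[OF v] t by (auto intro: continuous_on_subset)
  then have "norm (picard u t - picard v t) = norm (integral {0..t} (\<lambda>s. velocity u s - velocity v s))"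
    unfolding picard_def by (simp add: integral_diff integrable_continuous_complete)
  also have "\<dots> \<le> integral {0..t} (\<lambda>s. norm (velocity u s - velocity v s))"
    using vel_u vel_v by (intro integral_norm_bound_integral_complete continuous_intros)
  finally show ?thesis .
qed

lemma picard_diff_le:
  assumes L_B: "L_B-lipschitz_on UNIV B" and L_S: "0 \<le> L_S"
    and S_le: "\<And>s. s \<in> {0..t} \<Longrightarrow> norm (S u s - S v s) \<le> L_S * integral {0..s} (\<lambda>r. norm (u r - v r))"
    and u: "continuous_on I u" and v: "continuous_on I v" and t: "0 \<le> t" "{0..t} \<subseteq> I"
  shows "norm (picard u t - picard v t)
    \<le> ((L_B + \<alpha>\<^sub>j + L_S * t) / m\<^sub>A) * integral {0..t} (\<lambda>s. norm (u s - v s))"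
proof -
  define \<delta> where "\<delta> s = norm (u s - v s)" for s
  define D where "D = integral {0..t} \<delta>"
  have \<delta>_cont: "continuous_on {0..t} \<delta>"
    unfolding \<delta>_def using u v t(2) by (intro continuous_intros) (auto intro: continuous_on_subset)
  define a c where "a = (L_B + \<alpha>\<^sub>j) / m\<^sub>A" and "c = L_S * D / m\<^sub>A"
  have "norm (velocity u s - velocity v s) \<le> a * \<delta> s + c" if s: "s \<in> {0..t}" for s
  proof -
    have "integral {0..s} \<delta> \<le> D"
      unfolding D_def using s \<delta>_cont
      by (intro integral_subset_le integrable_continuous_real) (auto simp: \<delta>_def intro: continuous_on_subset)
    then have "norm (S u s - S v s) \<le> L_S * D"
      using S_le[OF s] L_S unfolding \<delta>_def by (meson mult_left_mono order_trans)
    then have "m\<^sub>A * norm (velocity u s - velocity v s) \<le> (L_B + \<alpha>\<^sub>j) * \<delta> s + L_S * D"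
      using velocity_diff_le[OF L_B, of u s v] unfolding \<delta>_def by linarith
    then show ?thesis using mA unfolding a_def c_def by (simp add: field_simps)
  qed
  then have "integral {0..t} (\<lambda>s. norm (velocity u s - velocity v s)) \<le> integral {0..t} (\<lambda>s. a * \<delta> s + c)"
    using continuous_on_velocity[OF u] continuous_on_velocity[OF v] \<delta>_cont t(2)
    by (intro integral_le integrable_continuous_real continuous_intros) (auto intro: continuous_on_subset)
  also have "\<dots> = integral {0..t} (\<lambda>s. a * \<delta> s) + integral {0..t} (\<lambda>s. c)"
    by (intro integral_add integrable_continuous_real continuous_intros \<delta>_cont)
  also have "\<dots> = a * D + c * t"
    unfolding D_def using t(1) by simp
  also have "\<dots> = ((L_B + \<alpha>\<^sub>j + L_S * t) / m\<^sub>A) * D"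
    unfolding a_def c_def using mA by (simp add: field_simps)
  finally show ?thesis
    using norm_picard_diff_le[OF u v t(2)] unfolding D_def \<delta>_def by linarith
qed

lemma history_dependent_picard: "history_dependent I picard"
proof (rule history_dependent_IccI)
  fix b :: real assume b: "0 \<le> b" "{0..b} \<subseteq> I"
  obtain L_B where L_B: "L_B-lipschitz_on UNIV B" using B_lip by blast
  obtain L_S where "L_S > 0" and L_S: "\<And>(u :: real \<Rightarrow> 'a) v t. continuous_on I u \<Longrightarrow> continuous_on I v \<Longrightarrow> t \<in> {0..b} \<Longrightarrow>
      norm (S u t - S v t) \<le> L_S * integral {0..t} (\<lambda>s. norm (u s - v s))"
    using history_dependent_Icc[OF S_hist b(2)] by blast
  define L where "L = (L_B + \<alpha>\<^sub>j + L_S * (b + 1)) / m\<^sub>A"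
  have "0 \<le> L_B" using L_B by (simp add: lipschitz_on_def)
  show "\<exists>L>0. \<forall>(u :: real \<Rightarrow> 'a) v. continuous_on I u \<longrightarrow> continuous_on I v \<longrightarrow>
      (\<forall>t\<in>{0..b}. norm (picard u t - picard v t) \<le> L * integral {0..t} (\<lambda>s. norm (u s - v s)))"
  proof (intro exI[of _ "L"] conjI allI impI ballI)
    show "0 < L" unfolding L_def using \<open>0 \<le> L_B\<close> alpha \<open>L_S > 0\<close> b(1) mA
      by (simp add: add_nonneg_pos)
  next
    fix u v :: "real \<Rightarrow> 'a" and t assume u: "continuous_on I u" and v: "continuous_on I v" and t: "t \<in> {0..b}"
    have sub: "{0..t} \<subseteq> I" using t b by auto
    have "norm (picard u t - picard v t)
        \<le> ((L_B + \<alpha>\<^sub>j + L_S * t) / m\<^sub>A) * integral {0..t} (\<lambda>s. norm (u s - v s))"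
      using t sub u v by (intro picard_diff_le[OF L_B less_imp_le[OF \<open>L_S > 0\<close>] L_S u v]) auto
    also have "\<dots> \<le> L * integral {0..t} (\<lambda>s. norm (u s - v s))"
      unfolding L_def using t mA \<open>L_S > 0\<close> continuous_on_subset[OF u sub] continuous_on_subset[OF v sub]
      by (intro mult_right_mono divide_right_mono integral_nonneg integrable_continuous_real
          continuous_intros) auto
    finally show "norm (picard u t - picard v t) \<le> L * integral {0..t} (\<lambda>s. norm (u s - v s))" .
  qed
qed

lemma fixed_point_regularity:
  assumes u: "continuous_on I u" and fixed: "\<And>t. t \<in> I \<Longrightarrow> picard u t = u t"
  shows "C1_on I u" and "\<And>t. t \<in> I \<Longrightarrow> tdot I u t = velocity u t" and "u 0 = u\<^sub>0"
proof -
  have deriv: "(u has_vector_derivative velocity u t) (at t within I)" if t: "t \<in> I" for t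
  proof -
    obtain b where b: "t \<le> b" "{0..b} \<subseteq> I" and at: "at t within I = at t within {0..b}"
      using at_within_Icc[OF t] by metis
    have tb: "t \<in> {0..b}" using b nonneg[OF t] by simp
    have "(u has_vector_derivative velocity u t) (at t within {0..b})"
      by (rule has_vector_derivative_transform[OF tb _ picard_has_vector_derivative[OF u b(2) tb]])
         (use b fixed in auto)
    then show ?thesis unfolding at .
  qed
  show tdot: "tdot I u t = velocity u t" if "t \<in> I" for t
    unfolding tdot_def by (rule vector_derivative_within[OF at_within_nontrivial[OF that] deriv[OF that]])
  show "C1_on I u"
    unfolding C1_on_def using deriv continuous_on_velocity[OF u]
    by (auto intro: differentiableI_vector continuous_on_eq simp: tdot)
  show "u 0 = u\<^sub>0" using fixed[OF zero_mem] by (simp add: picard_def)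
qed

lemma inclusion_iff_velocity:
  "- x \<in> normal_cone (Ct f j K (u t) t) (A x + B (u t) + S u t) \<longleftrightarrow> x = velocity u t"
  using normal_cone_iff_solves_vi[of x "u t" t "B (u t) + S u t"]
    vi_solution_eqI solves_vi_vi_solution
  unfolding velocity_def by (auto simp: add.assoc)

definition solution :: "(real \<Rightarrow> 'a) \<Rightarrow> bool" where
  "solution w \<longleftrightarrow> C1_on I w
    \<and> (\<forall>t\<in>I. - tdot I w t \<in> normal_cone (Ct f j K (w t) t) (A (tdot I w t) + B (w t) + S w t))
    \<and> w 0 = u\<^sub>0"

lemma fixed_point_is_solution:
  assumes u: "continuous_on I u" and fixed: "\<And>t. t \<in> I \<Longrightarrow> picard u t = u t"
  shows "solution u" and "\<And>t. t \<in> I \<Longrightarrow> tdot I u t \<in> K"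
  using fixed_point_regularity[OF u fixed] inclusion_iff_velocity vi_solution_mem
  unfolding solution_def velocity_def by simp_all

lemma solution_is_fixed_point:
  assumes "solution w"
  shows "continuous_on I w" and "\<And>t. t \<in> I \<Longrightarrow> picard w t = w t"
proof -
  have deriv: "(w has_vector_derivative velocity w s) (at s within I)" if s: "s \<in> I" for s
  proof -
    have "w differentiable (at s within I)" using assms s unfolding solution_def C1_on_def by blast
    then have "(w has_vector_derivative tdot I w s) (at s within I)"
      unfolding tdot_def by (rule vector_derivative_works[THEN iffD1])
    moreover have "tdot I w s = velocity w s"
      using assms s inclusion_iff_velocity unfolding solution_def by blast
    ultimately show ?thesis by simp
  qed
  then show "continuous_on I w"
    unfolding continuous_on_eq_continuous_within using has_vector_derivative_continuous by blast
  fix t assume t: "t \<in> I"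
  have "(w has_vector_derivative velocity w s) (at s within {0..t})" if "s \<in> {0..t}" for s
    using deriv Icc_subset[OF t] that by (meson has_vector_derivative_within_subset subsetD)
  then have "(velocity w has_integral (w t - w 0)) {0..t}"
    by (rule fundamental_theorem_of_calculus_complete[OF nonneg[OF t]])
  moreover have "w 0 = u\<^sub>0" using assms unfolding solution_def by blast
  ultimately show "picard w t = w t"
    unfolding picard_def by (simp add: integral_unique)
qed

end

theorem corollary4p3:
  fixes I :: "real set" and T :: real
    and K :: "'a::{real_inner,complete_space} set"
    and A B :: "'a \<Rightarrow> 'a" and m\<^sub>A L\<^sub>A :: real
    and f :: "real \<Rightarrow> 'a" and u\<^sub>0 :: 'a
    and S :: "(real \<Rightarrow> 'a) \<Rightarrow> (real \<Rightarrow> 'a)"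
    and j :: "'a \<Rightarrow> 'a \<Rightarrow> real" and \<alpha>\<^sub>j :: real
  assumes I: "(T > 0 \<and> I = {0..T}) \<or> I = {0..}"
    and K_ne: "K \<noteq> {}" and K_closed: "closed K" and K_convex: "convex K"
    and K_cone: "cone K"
    and mA: "m\<^sub>A > 0" and LA: "L\<^sub>A > 0"
    and A_mono: "\<And>u v. (A u - A v) \<bullet> (u - v) \<ge> m\<^sub>A * (norm (u - v))\<^sup>2"
    and A_lip: "\<And>u v. norm (A u - A v) \<le> L\<^sub>A * norm (u - v)"
    and f_cont: "continuous_on I f"
    and B_lip: "\<exists>L. L-lipschitz_on UNIV B"
    and S_maps: "\<And>u. continuous_on I u \<Longrightarrow> continuous_on I (S u)"
    and S_hist: "history_dependent I S"
    and j_convex: "\<And>\<eta>. convex_on K (j \<eta>)"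
    and j_homog: "\<And>\<eta> c v. c > 0 \<Longrightarrow> v \<in> K \<Longrightarrow> j \<eta> (c *\<^sub>R v) = c * j \<eta> v"
    and j_lip: "\<And>\<eta>. \<exists>L. L-lipschitz_on K (j \<eta>)"
    and alpha: "\<alpha>\<^sub>j \<ge> 0"
    and j_cross: "\<And>\<eta>1 \<eta>2 v1 v2. v1 \<in> K \<Longrightarrow> v2 \<in> K \<Longrightarrow>
        j \<eta>1 v2 - j \<eta>1 v1 + j \<eta>2 v1 - j \<eta>2 v2 \<le> \<alpha>\<^sub>j * norm (\<eta>1 - \<eta>2) * norm (v1 - v2)"
  shows "\<exists>u. C1_on I u
           \<and> (\<forall>t\<in>I. - tdot I u t \<in> normal_cone (Ct f j K (u t) t)
                               (A (tdot I u t) + B (u t) + S u t))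
           \<and> u 0 = u\<^sub>0
           \<and> (\<forall>t\<in>I. tdot I u t \<in> K)
           \<and> (\<forall>w. C1_on I w
                \<and> (\<forall>t\<in>I. - tdot I w t \<in> normal_cone (Ct f j K (w t) t)
                                    (A (tdot I w t) + B (w t) + S w t))
                \<and> w 0 = u\<^sub>0 \<longrightarrow> (\<forall>t\<in>I. w t = u t))"
proof -
  interpret sweeping_process I T K A B m\<^sub>A L\<^sub>A f u\<^sub>0 S j \<alpha>\<^sub>j
    by unfold_locales (fact assms)+
  obtain u where u: "continuous_on I u" and fixed: "\<And>t. t \<in> I \<Longrightarrow> picard u t = u t"
    using history_dependent_fixed_point[OF continuous_on_picard history_dependent_picard] by blast
  have unique: "w t = u t" if w: "solution w" and t: "t \<in> I" for w t
    using history_dependent_fixed_point_unique[OF history_dependent_picard nonneg[OF t] Icc_subset[OF t]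
        solution_is_fixed_point[OF w] u fixed] .
  show ?thesis
    using fixed_point_is_solution[OF u fixed] unique
    unfolding solution_def by blast
qed
end
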